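(* Let $N\ge1$ be an integer and $\beta,\gamma,\xi,\eta,D,R>0$. Define, for $z>0$, $\bar C(z)=\dfrac{\gamma\xi R^2e^{-\frac{R^2}{4zD}-\eta z}}{8z^2D^2}$ and $g(t)=N\int_0^t\bar C(t-\tau)\,d\tau$. Then the equilibrium $(V,X)=(0,0)$ of the linear system $$\dot V=-\beta V-g(t)X,\qquad \dot X=V$$ is globally uniformly asymptotically stable with exponential rate of convergence.
   Context: This planar system is the linearization, written in centre-of-mass variables for each particle and each coordinate, of a hybrid model of $N$ particles in $\mathbb{R}^2$ with Cucker–Smale alignment (strength $\beta$) and chemotaxis towards a signal diffusing with coefficient $D$, degrading at rate $\eta$, produced at rate $\xi$ on discs of radius $R$, with chemotactic sensitivity $\gamma$. *)

theory Defs
  imports "HOL-Analysis.Analysis"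
begin

text \<open>Kernel C-bar(z) = gamma xi R^2 exp(-R^2/(4 z D) - eta z) / (8 z^2 D^2), for z > 0.
  (At z = 0 Isabelle's division convention gives 0, which is also the limit as z tends to 0+.)\<close>
definition Cbar :: "real \<Rightarrow> real \<Rightarrow> real \<Rightarrow> real \<Rightarrow> real \<Rightarrow> real \<Rightarrow> real" where
  "Cbar \<gamma> \<xi> \<eta> D R z =
     \<gamma> * \<xi> * R\<^sup>2 * exp (- (R\<^sup>2 / (4 * z * D)) - \<eta> * z) / (8 * z\<^sup>2 * D\<^sup>2)"

definition gfun :: "nat \<Rightarrow> real \<Rightarrow> real \<Rightarrow> real \<Rightarrow> real \<Rightarrow> real \<Rightarrow> real \<Rightarrow> real" where
  "gfun N \<gamma> \<xi> \<eta> D R t = real N * integral {0..t} (\<lambda>\<tau>. Cbar \<gamma> \<xi> \<eta> D R (t - \<tau>))"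

definition is_solution :: "real \<Rightarrow> (real \<Rightarrow> real) \<Rightarrow> real \<Rightarrow> (real \<Rightarrow> real) \<Rightarrow> (real \<Rightarrow> real) \<Rightarrow> bool" where
  "is_solution \<beta> g t0 V X \<longleftrightarrow>
     (\<forall>t\<ge>t0. (V has_real_derivative (- \<beta> * V t - g t * X t)) (at t within {t0..})
            \<and> (X has_real_derivative V t) (at t within {t0..}))"

end

theory Submission
  imports Defs "HOL-Real_Asymp.Real_Asymp"
begin

text \<open>Since \<open>Cbar\<close> is continuous, nonnegative and bounded by a multiple of \<open>exp (- \<eta> z)\<close>,
  the coefficient \<open>g t = N * integral {0..t} Cbar\<close> increases to a finite positive limit \<open>L\<close>.
  For a damped oscillator whose stiffness converges to \<open>L\<close> from below, the energy \<open>V\<^sup>2 + X\<^sup>2\<close>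
  grows at most exponentially during a fixed initial period, after which \<open>g\<close> is so close to \<open>L\<close>
  that the strict Lyapunov function \<open>V\<^sup>2 + L X\<^sup>2 + \<epsilon> X V\<close> of the limit system decays
  exponentially. The length of the initial period does not depend on the initial time, which makes
  the estimate uniform.\<close>

lemma DERIV_le_linear_imp_le_exp:
  fixes f f' :: "real \<Rightarrow> real"
  assumes "a \<le> b"
    and der: "\<And>t. t \<in> {a..b} \<Longrightarrow> (f has_real_derivative f' t) (at t within {a..b})"
    and le: "\<And>t. t \<in> {a..b} \<Longrightarrow> f' t \<le> k * f t"
  shows "f b \<le> f a * exp (k * (b - a))"
proof -
  define h where "h t = f t * exp (- k * (t - a))" for t
  have hd: "(h has_real_derivative (f' t - k * f t) * exp (- k * (t - a))) (at t within {a..b})"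
    if "t \<in> {a..b}" for t
    unfolding h_def
    by (rule derivative_eq_intros der[OF that] refl)+ (simp add: algebra_simps)
  have "h b \<le> h a"
  proof (rule DERIV_nonpos_imp_decreasing_open[OF \<open>a \<le> b\<close>])
    show "continuous_on {a..b} h"
      using hd by (rule DERIV_continuous_on)
    fix t assume t: "a < t" "t < b"
    have "at t within {a..b} = at t"
      using t by (intro at_within_interior) auto
    moreover have "(f' t - k * f t) * exp (- k * (t - a)) \<le> 0"
      using le[of t] t by (intro mult_nonpos_nonneg) auto
    ultimately show "\<exists>y. (h has_real_derivative y) (at t) \<and> y \<le> 0"
      using hd[of t] t by auto
  qed
  then have "f b * exp (- k * (b - a)) * exp (k * (b - a)) \<le> f a * exp (k * (b - a))"
    by (intro mult_right_mono) (auto simp: h_def)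
  then show ?thesis
    by (simp add: mult.assoc flip: exp_add)
qed

lemma mono_on_tendsto_Sup_at_top:
  fixes f :: "real \<Rightarrow> real"
  assumes mono: "mono_on {a..} f" and bdd: "bdd_above (f ` {a..})"
  shows "(f \<longlongrightarrow> Sup (f ` {a..})) at_top"
proof (rule increasing_tendsto)
  show "\<forall>\<^sub>F t in at_top. f t \<le> Sup (f ` {a..})"
    using eventually_ge_at_top[of a] by eventually_elim (use bdd in \<open>auto intro: cSup_upper\<close>)
  fix y assume "y < Sup (f ` {a..})"
  then obtain s where s: "a \<le> s" "y < f s"
    by (subst (asm) less_cSup_iff) (use bdd in auto)
  show "\<forall>\<^sub>F t in at_top. y < f t"
    using eventually_ge_at_top[of s]
    by eventually_elim (use s mono in \<open>auto simp: mono_on_def intro: less_le_trans\<close>)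
qed

lemma lyapunov_form_bounds:
  fixes v x L \<epsilon> :: real
  assumes "L > 0" "0 < \<epsilon>" "\<epsilon> \<le> 1" "\<epsilon> \<le> L"
  shows "min 1 L / 2 * (v^2 + x^2) \<le> v^2 + L * x^2 + \<epsilon> * (x * v)"
    and "v^2 + L * x^2 + \<epsilon> * (x * v) \<le> 3/2 * max 1 L * (v^2 + x^2)"
proof -
  have "0 \<le> (v + \<epsilon> * x)^2" "0 \<le> (v - \<epsilon> * x)^2"
    by auto
  then have cross: "\<bar>2 * (\<epsilon> * (x * v))\<bar> \<le> v^2 + \<epsilon>^2 * x^2"
    by (simp add: abs_le_iff power2_eq_square algebra_simps)
  have "\<epsilon> * \<epsilon> \<le> 1 * \<epsilon>"
    using assms by (intro mult_right_mono) auto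
  then have "\<epsilon>^2 \<le> L"
    using assms unfolding power2_eq_square by linarith
  then have "\<epsilon>^2 * x^2 \<le> L * x^2"
    by (rule mult_right_mono) simp
  moreover have "min 1 L * v^2 \<le> v^2" "min 1 L * x^2 \<le> L * x^2"
    using assms by (auto intro: mult_left_le_one_le mult_right_mono)
  moreover have "v^2 \<le> max 1 L * v^2" "L * x^2 \<le> max 1 L * x^2"
    using mult_right_mono[of 1 "max 1 L" "v^2"] by (auto intro: mult_right_mono)
  ultimately show "min 1 L / 2 * (v^2 + x^2) \<le> v^2 + L * x^2 + \<epsilon> * (x * v)"
    and "v^2 + L * x^2 + \<epsilon> * (x * v) \<le> 3/2 * max 1 L * (v^2 + x^2)"
    using cross by (simp_all add: abs_le_iff algebra_simps)
qed

lemma energy_derivative_le: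
  fixes v x g L \<beta> :: real
  assumes "\<beta> \<ge> 0" "0 \<le> g" "g \<le> L"
  shows "2 * v * (- \<beta> * v - g * x) + 2 * x * v \<le> (1 + L) * (v^2 + x^2)"
proof -
  have "0 \<le> (\<bar>x\<bar> - \<bar>v\<bar>)^2"
    by simp
  then have "2 * \<bar>x * v\<bar> \<le> v^2 + x^2"
    by (simp add: power2_diff abs_mult)
  then have "\<bar>1 - g\<bar> * (2 * \<bar>x * v\<bar>) \<le> (1 + L) * (v^2 + x^2)"
    using assms by (intro mult_mono) auto
  moreover have "(1 - g) * (2 * (x * v)) \<le> \<bar>1 - g\<bar> * (2 * \<bar>x * v\<bar>)"
    by (metis abs_ge_self abs_mult abs_numeral)
  moreover have "0 \<le> \<beta> * v^2"
    using assms by simp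
  ultimately show ?thesis
    by (simp add: algebra_simps power2_eq_square)
qed

text \<open>The cross term carries the coefficient \<open>2 (L - g) - \<epsilon> \<beta>\<close>, of modulus at most \<open>\<epsilon> \<beta>\<close> once \<open>g\<close>
  is within \<open>\<epsilon> \<beta> / 2\<close> below \<open>L\<close>; it is absorbed into the two diagonal terms.\<close>
lemma lyapunov_derivative_le:
  fixes v x g L \<beta> \<epsilon> :: real
  assumes "0 < \<epsilon>" "\<epsilon> \<le> \<beta>" "\<epsilon> * \<beta> \<le> L / 8" "L - \<epsilon> * \<beta> / 2 \<le> g" "g \<le> L"
  shows "2 * v * (- \<beta> * v - g * x) + 2 * L * x * v + \<epsilon> * (v^2 + x * (- \<beta> * v - g * x))
           \<le> - min (\<beta> / 2) (\<epsilon> * L / 4) * (v^2 + x^2)"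
proof -
  define c where "c = 2 * (L - g) - \<epsilon> * \<beta>"
  have "c * (x * v) \<le> \<bar>c\<bar> * \<bar>x * v\<bar>"
    by (metis abs_ge_self abs_mult)
  also have "\<dots> \<le> \<epsilon> * \<beta> * \<bar>x * v\<bar>"
    using assms by (intro mult_right_mono) (auto simp: c_def)
  also have "\<dots> \<le> \<beta> * ((v^2 + \<epsilon>^2 * x^2) / 2)"
  proof -
    have "0 \<le> (\<bar>v\<bar> - \<epsilon> * \<bar>x\<bar>)^2"
      by simp
    then have "\<epsilon> * \<bar>x * v\<bar> \<le> (v^2 + \<epsilon>^2 * x^2) / 2"
      using assms by (simp add: power2_diff abs_mult power_mult_distrib algebra_simps)
    then have "\<beta> * (\<epsilon> * \<bar>x * v\<bar>) \<le> \<beta> * ((v^2 + \<epsilon>^2 * x^2) / 2)"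
      using assms by (intro mult_left_mono) auto
    then show ?thesis
      by (simp add: mult.assoc mult.left_commute)
  qed
  also have "\<dots> \<le> 1/2 * (\<beta> * v^2) + 1/16 * (\<epsilon> * L * x^2)"
    using mult_right_mono[OF assms(3), of "\<epsilon> * x^2"] assms
    by (simp add: power2_eq_square algebra_simps)
  finally have cross: "c * (x * v) \<le> 1/2 * (\<beta> * v^2) + 1/16 * (\<epsilon> * L * x^2)" .
  have "\<epsilon> * (15/16 * L) * x^2 \<le> \<epsilon> * g * x^2"
    using assms by (intro mult_right_mono mult_left_mono) auto
  then have g_term: "15/16 * (\<epsilon> * L * x^2) \<le> \<epsilon> * g * x^2"
    by (simp add: algebra_simps)
  have "\<epsilon> * v^2 \<le> \<beta> * v^2"
    using assms by (intro mult_right_mono) auto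
  moreover have "min (\<beta> / 2) (\<epsilon> * L / 4) * v^2 \<le> 1/2 * (\<beta> * v^2)"
    and "min (\<beta> / 2) (\<epsilon> * L / 4) * x^2 \<le> 1/4 * (\<epsilon> * L * x^2)"
    using mult_right_mono[of "min (\<beta> / 2) (\<epsilon> * L / 4)" "\<beta> / 2" "v^2"]
      mult_right_mono[of "min (\<beta> / 2) (\<epsilon> * L / 4)" "\<epsilon> * L / 4" "x^2"] by simp_all
  moreover have "2 * v * (- \<beta> * v - g * x) + 2 * L * x * v + \<epsilon> * (v^2 + x * (- \<beta> * v - g * x))
      = - 2 * (\<beta> * v^2) + \<epsilon> * v^2 + c * (x * v) - \<epsilon> * g * x^2"
    by (simp add: c_def power2_eq_square algebra_simps)
  moreover have "- min (\<beta> / 2) (\<epsilon> * L / 4) * (v^2 + x^2)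
      = - (min (\<beta> / 2) (\<epsilon> * L / 4) * v^2) - min (\<beta> / 2) (\<epsilon> * L / 4) * x^2"
    by (simp add: algebra_simps)
  moreover have "0 \<le> \<epsilon> * L * x^2"
    using assms mult_pos_pos[of \<epsilon> \<beta>] by (intro mult_nonneg_nonneg) auto
  ultimately show ?thesis
    using cross g_term by linarith
qed

lemma solution_quadratic_form_has_derivative:
  assumes "is_solution \<beta> g t0 V X" "t0 \<le> s" "S \<subseteq> {t0..}"
  shows "((\<lambda>t. (V t)^2 + q * (X t)^2 + c * (X t * V t)) has_real_derivative
      2 * V s * (- \<beta> * V s - g s * X s) + 2 * q * X s * V s
        + c * ((V s)^2 + X s * (- \<beta> * V s - g s * X s))) (at s within S)"
proof -
  have "(V has_real_derivative - \<beta> * V s - g s * X s) (at s within S)"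
    and "(X has_real_derivative V s) (at s within S)"
    using assms unfolding is_solution_def by (auto intro: DERIV_subset)
  then show ?thesis
    by (auto intro!: derivative_eq_intros simp: power2_eq_square algebra_simps)
qed

lemma solution_energy_growth:
  assumes sol: "is_solution \<beta> g t0 V X" and "\<beta> \<ge> 0"
    and g: "\<And>s. t0 \<le> s \<Longrightarrow> 0 \<le> g s \<and> g s \<le> L" and "t0 \<le> t"
  shows "(V t)^2 + (X t)^2 \<le> ((V t0)^2 + (X t0)^2) * exp ((1 + L) * (t - t0))"
proof (rule DERIV_le_linear_imp_le_exp[OF \<open>t0 \<le> t\<close>])
  fix s assume s: "s \<in> {t0..t}"
  show "((\<lambda>t. (V t)^2 + (X t)^2) has_real_derivative 2 * V s * (- \<beta> * V s - g s * X s) + 2 * X s * V s)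
      (at s within {t0..t})"
    using solution_quadratic_form_has_derivative[OF sol, of s "{t0..t}" 1 0] s by simp
  show "2 * V s * (- \<beta> * V s - g s * X s) + 2 * X s * V s \<le> (1 + L) * ((V s)^2 + (X s)^2)"
    using energy_derivative_le[OF \<open>\<beta> \<ge> 0\<close>] g s by auto
qed

lemma solution_energy_decay:
  fixes \<beta> L \<epsilon> :: real
  defines "k \<equiv> min (\<beta> / 2) (\<epsilon> * L / 4) / (3/2 * max 1 L)"
  assumes sol: "is_solution \<beta> g t0 V X"
    and "L > 0" "0 < \<epsilon>" "\<epsilon> \<le> 1" "\<epsilon> \<le> L" "\<epsilon> \<le> \<beta>" "\<epsilon> * \<beta> \<le> L / 8"
    and g: "\<And>u. s \<le> u \<Longrightarrow> L - \<epsilon> * \<beta> / 2 \<le> g u \<and> g u \<le> L"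
    and "t0 \<le> s" "s \<le> t"
  shows "(V t)^2 + (X t)^2 \<le> 3 * max 1 L / min 1 L * ((V s)^2 + (X s)^2) * exp (- k * (t - s))"
proof -
  define E W where "E u = (V u)^2 + (X u)^2" and "W u = (V u)^2 + L * (X u)^2 + \<epsilon> * (X u * V u)" for u
  have WE: "min 1 L / 2 * E u \<le> W u" "W u \<le> 3/2 * max 1 L * E u" for u
    unfolding E_def W_def using lyapunov_form_bounds assms by auto
  have "min 1 L / 2 * E t \<le> W t"
    by (rule WE)
  also have "W t \<le> W s * exp (- k * (t - s))"
  proof (rule DERIV_le_linear_imp_le_exp[OF \<open>s \<le> t\<close>])
    fix u assume u: "u \<in> {s..t}"
    show "(W has_real_derivative 2 * V u * (- \<beta> * V u - g u * X u) + 2 * L * X u * V u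
        + \<epsilon> * ((V u)^2 + X u * (- \<beta> * V u - g u * X u))) (at u within {s..t})"
      unfolding W_def using u \<open>t0 \<le> s\<close>
      by (intro solution_quadratic_form_has_derivative[OF sol]) auto
    have "2 * V u * (- \<beta> * V u - g u * X u) + 2 * L * X u * V u
        + \<epsilon> * ((V u)^2 + X u * (- \<beta> * V u - g u * X u)) \<le> - min (\<beta> / 2) (\<epsilon> * L / 4) * E u"
      unfolding E_def using lyapunov_derivative_le g[of u] u assms by auto
    also have "\<dots> \<le> - k * W u"
      using mult_left_mono[OF WE(2)[of u], of "min (\<beta> / 2) (\<epsilon> * L / 4)"] assms
      by (simp add: k_def field_simps)
    finally show "2 * V u * (- \<beta> * V u - g u * X u) + 2 * L * X u * V u
        + \<epsilon> * ((V u)^2 + X u * (- \<beta> * V u - g u * X u)) \<le> - k * W u" .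
  qed
  also have "\<dots> \<le> 3/2 * max 1 L * E s * exp (- k * (t - s))"
    by (intro mult_right_mono WE) auto
  finally show ?thesis
    using \<open>L > 0\<close> by (simp add: E_def field_simps)
qed

lemma two_phase_exp_bound:
  fixes E :: "real \<Rightarrow> real"
  assumes "0 \<le> t0" "t0 \<le> t" "0 \<le> T" "0 \<le> \<Lambda>" "0 < k" "1 \<le> Q" "0 \<le> E t0"
    and growth: "\<And>s. t0 \<le> s \<Longrightarrow> E s \<le> E t0 * exp (\<Lambda> * (s - t0))"
    and decay: "\<And>s. max t0 T \<le> s \<Longrightarrow> s \<le> t \<Longrightarrow> E t \<le> Q * E s * exp (- k * (t - s))"
  shows "E t \<le> Q * exp ((\<Lambda> + k) * T) * E t0 * exp (- k * (t - t0))"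
proof (cases "t \<le> max t0 T")
  case True
  then have "t - t0 \<le> T"
    using assms by linarith
  have "E t \<le> E t0 * exp (\<Lambda> * (t - t0))"
    using growth[OF \<open>t0 \<le> t\<close>] .
  also have "\<dots> \<le> E t0 * exp (\<Lambda> * T)"
    using mult_left_mono[OF \<open>t - t0 \<le> T\<close> \<open>0 \<le> \<Lambda>\<close>] assms by (intro mult_left_mono) auto
  also have "\<dots> \<le> E t0 * (Q * exp ((\<Lambda> + k) * T - k * (t - t0)))"
  proof (intro mult_left_mono)
    have "\<Lambda> * T \<le> (\<Lambda> + k) * T - k * (t - t0)"
      using mult_left_mono[OF \<open>t - t0 \<le> T\<close>, of k] assms by (simp add: algebra_simps)
    then have "exp (\<Lambda> * T) \<le> 1 * exp ((\<Lambda> + k) * T - k * (t - t0))"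
      by simp
    also have "\<dots> \<le> Q * exp ((\<Lambda> + k) * T - k * (t - t0))"
      using \<open>1 \<le> Q\<close> by (intro mult_right_mono) auto
    finally show "exp (\<Lambda> * T) \<le> Q * exp ((\<Lambda> + k) * T - k * (t - t0))" .
  qed (use assms in auto)
  finally show ?thesis
    by (simp add: exp_diff exp_add field_simps)
next
  case False
  let ?s = "max t0 T"
  have "?s - t0 \<le> T"
    using assms by linarith
  have "E ?s \<le> E t0 * exp (\<Lambda> * (?s - t0))"
    by (rule growth) simp
  also have "\<dots> \<le> E t0 * exp (\<Lambda> * T)"
    using mult_left_mono[OF \<open>?s - t0 \<le> T\<close> \<open>0 \<le> \<Lambda>\<close>] assms by (intro mult_left_mono) auto
  finally have growth_phase: "E ?s \<le> E t0 * exp (\<Lambda> * T)" .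
  have "E t \<le> Q * E ?s * exp (- k * (t - ?s))"
    using False by (intro decay) auto
  also have "\<dots> \<le> Q * (E t0 * exp (\<Lambda> * T)) * exp (- k * (t - ?s))"
    using growth_phase assms by (intro mult_right_mono mult_left_mono) auto
  also have "\<dots> \<le> Q * (E t0 * exp (\<Lambda> * T)) * exp (k * T - k * (t - t0))"
    using mult_left_mono[OF \<open>?s - t0 \<le> T\<close>, of k] assms
    by (intro mult_left_mono) (auto simp: algebra_simps)
  finally show ?thesis
    by (simp add: exp_diff exp_add field_simps)
qed

lemma exp_stable_if_coefficient_tendsto:
  fixes g :: "real \<Rightarrow> real"
  assumes "\<beta> > 0" "L > 0" and g: "\<And>t. 0 \<le> t \<Longrightarrow> 0 \<le> g t \<and> g t \<le> L"
    and lim: "(g \<longlongrightarrow> L) at_top"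
  shows "\<exists>K r. K > 0 \<and> r > 0 \<and>
    (\<forall>t0 \<ge> 0. \<forall>V X. is_solution \<beta> g t0 V X \<longrightarrow>
       (\<forall>t \<ge> t0. norm (V t, X t) \<le> K * exp (- r * (t - t0)) * norm (V t0, X t0)))"
proof -
  define \<epsilon> where "\<epsilon> = min (min \<beta> 1) (min L (L / (8 * \<beta>)))"
  have "\<epsilon> \<le> L / (8 * \<beta>)"
    by (simp add: \<epsilon>_def)
  then have \<epsilon>: "0 < \<epsilon>" "\<epsilon> \<le> 1" "\<epsilon> \<le> L" "\<epsilon> \<le> \<beta>" "\<epsilon> * \<beta> \<le> L / 8"
    using assms by (auto simp: \<epsilon>_def pos_le_divide_eq)
  have "\<forall>\<^sub>F t in at_top. L - \<epsilon> * \<beta> / 2 < g t"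
    using \<epsilon> assms by (intro order_tendstoD(1)[OF lim]) auto
  then obtain T where "0 \<le> T" and T: "\<And>t. T \<le> t \<Longrightarrow> L - \<epsilon> * \<beta> / 2 < g t"
    by (metis eventually_at_top_linorder max.boundedE max.cobounded2)
  define k where "k = min (\<beta> / 2) (\<epsilon> * L / 4) / (3/2 * max 1 L)"
  define Q where "Q = 3 * max 1 L / min 1 L"
  define C where "C = Q * exp ((1 + L + k) * T)"
  have "k > 0" "Q \<ge> 1"
    using assms \<epsilon> by (auto simp: k_def Q_def)
  have energy: "(V t)^2 + (X t)^2 \<le> C * ((V t0)^2 + (X t0)^2) * exp (- k * (t - t0))"
    if sol: "is_solution \<beta> g t0 V X" and "0 \<le> t0" "t0 \<le> t" for V X t0 t
    unfolding C_def
  proof (rule two_phase_exp_bound[where E = "\<lambda>u. (V u)^2 + (X u)^2"])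
    show "(V t)^2 + (X t)^2 \<le> Q * ((V s)^2 + (X s)^2) * exp (- k * (t - s))"
      if "max t0 T \<le> s" "s \<le> t" for s
      unfolding k_def Q_def using that \<open>0 \<le> t0\<close> \<epsilon> assms T g
      by (intro solution_energy_decay[OF sol]) (auto intro: less_imp_le)
    show "(V s)^2 + (X s)^2 \<le> ((V t0)^2 + (X t0)^2) * exp ((1 + L) * (s - t0))"
      if "t0 \<le> s" for s
      using that \<open>0 \<le> t0\<close> assms g by (intro solution_energy_growth[OF sol]) auto
  qed (use that \<open>0 \<le> T\<close> \<open>k > 0\<close> \<open>Q \<ge> 1\<close> assms in auto)
  show ?thesis
  proof (intro exI conjI allI impI)
    fix t0 V X t
    assume "0 \<le> t0" "is_solution \<beta> g t0 V X" "t0 \<le> t"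
    then have "sqrt ((V t)^2 + (X t)^2)
        \<le> sqrt (C * ((V t0)^2 + (X t0)^2) * (exp (- (k / 2) * (t - t0)))^2)"
      using energy by (simp flip: exp_of_nat_mult)
    then show "norm (V t, X t) \<le> sqrt C * exp (- (k / 2) * (t - t0)) * norm (V t0, X t0)"
      by (simp add: norm_Pair real_sqrt_mult mult_ac)
  qed (use \<open>k > 0\<close> \<open>Q \<ge> 1\<close> in \<open>auto simp: C_def\<close>)
qed

lemma Cbar_nonneg:
  assumes "\<gamma> > 0" "\<xi> > 0" "D > 0"
  shows "0 \<le> Cbar \<gamma> \<xi> \<eta> D R z"
  using assms unfolding Cbar_def by (intro divide_nonneg_nonneg mult_nonneg_nonneg) auto

lemma Cbar_pos:
  assumes "\<gamma> > 0" "\<xi> > 0" "D > 0" "R > 0" "z > 0"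
  shows "0 < Cbar \<gamma> \<xi> \<eta> D R z"
  using assms unfolding Cbar_def by (intro divide_pos_pos mult_pos_pos) auto

lemma Cbar_eq:
  "Cbar \<gamma> \<xi> \<eta> D R z = \<gamma> * \<xi> * R^2 / (8 * D^2) * (exp (- (R^2 / (4 * D) / z) - \<eta> * z) / z^2)"
  unfolding Cbar_def by (simp add: field_simps)

lemma continuous_on_Cbar:
  assumes "D > 0" "R > 0"
  shows "continuous_on {0..} (Cbar \<gamma> \<xi> \<eta> D R)"
proof -
  have "continuous (at z within {0..}) (Cbar \<gamma> \<xi> \<eta> D R)" if "z \<ge> 0" for z
  proof (cases "z = 0")
    case True
    have "((\<lambda>z. exp (- (B / z) - \<eta> * z) / z^2) \<longlongrightarrow> 0) (at_right 0)" if "B > 0" for B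
      using that by real_asymp
    from this[of "R^2 / (4 * D)"]
    have "((\<lambda>z. exp (- (R^2 / (4 * D) / z) - \<eta> * z) / z^2) \<longlongrightarrow> 0) (at_right 0)"
      using assms by simp
    then have "(Cbar \<gamma> \<xi> \<eta> D R \<longlongrightarrow> 0) (at_right 0)"
      unfolding Cbar_eq by (rule tendsto_mult_right_zero)
    then show ?thesis
      using True by (simp add: continuous_within at_within_Ici_at_right Cbar_def)
  next
    case False
    then have "isCont (Cbar \<gamma> \<xi> \<eta> D R) z"
      unfolding Cbar_def using assms by (intro continuous_intros) auto
    then show ?thesis
      by (rule continuous_at_imp_continuous_at_within)
  qed
  then show ?thesis
    by (simp add: continuous_on_eq_continuous_within)
qed

lemma Cbar_integrable:
  assumes "D > 0" "R > 0" "0 \<le> a"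
  shows "Cbar \<gamma> \<xi> \<eta> D R integrable_on {a..b}"
  using assms by (intro integrable_continuous_interval continuous_on_subset[OF continuous_on_Cbar]) auto

text \<open>The Gaussian factor is dominated via \<open>exp (-u) \<le> 2 / u\<^sup>2\<close>, which cancels the singular
  factor \<open>1 / z\<^sup>2\<close>.\<close>
lemma Cbar_le_exp:
  assumes "\<gamma> > 0" "\<xi> > 0" "D > 0" "R > 0" "z \<ge> 0"
  shows "Cbar \<gamma> \<xi> \<eta> D R z \<le> 4 * \<gamma> * \<xi> / R^2 * exp (- \<eta> * z)"
proof (cases "z = 0")
  case True
  then show ?thesis
    using assms by (simp add: Cbar_def)
next
  case False
  with assms have z: "z > 0" by simp
  define B where "B = R^2 / (4 * D)"
  have B: "B > 0"
    using assms by (simp add: B_def)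
  have "(B / z)^2 / 2 \<le> exp (B / z)"
    using exp_lower_Taylor_quadratic[of "B / z"] divide_pos_pos[OF B z] by linarith
  then have bound: "exp (- (B / z)) / z^2 \<le> 2 / B^2"
    using B z by (simp add: exp_minus field_simps)
  have "Cbar \<gamma> \<xi> \<eta> D R z
      = \<gamma> * \<xi> * R^2 / (8 * D^2) * exp (- \<eta> * z) * (exp (- (B / z)) / z^2)"
    by (simp add: Cbar_eq B_def exp_diff exp_minus field_simps)
  also have "\<dots> \<le> \<gamma> * \<xi> * R^2 / (8 * D^2) * exp (- \<eta> * z) * (2 / B^2)"
    using bound assms by (intro mult_left_mono) auto
  also have "\<dots> = 4 * \<gamma> * \<xi> / R^2 * exp (- \<eta> * z)"
    using assms by (simp add: B_def field_simps power2_eq_square)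
  finally show ?thesis .
qed

lemma gfun_eq_integral_Cbar:
  assumes "t \<ge> 0"
  shows "gfun N \<gamma> \<xi> \<eta> D R t = real N * integral {0..t} (Cbar \<gamma> \<xi> \<eta> D R)"
proof -
  let ?c = "Cbar \<gamma> \<xi> \<eta> D R"
  have "integral {0..t} (\<lambda>\<tau>. ?c (t - \<tau>)) = integral {-t..0} (\<lambda>y. ?c (t + y))"
    using Henstock_Kurzweil_Integration.integral_reflect_real[of 0 "-t" "\<lambda>y. ?c (t + y)"] by simp
  also have "\<dots> = integral {0..t} ?c"
    using integral_shift_Icc_real[of "-t" 0 ?c t] by (simp add: o_def)
  finally show ?thesis
    unfolding gfun_def by simp
qed

lemma integral_Cbar_nonneg:
  assumes "\<gamma> > 0" "\<xi> > 0" "D > 0" "R > 0"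
  shows "0 \<le> integral {0..t} (Cbar \<gamma> \<xi> \<eta> D R)"
  using assms by (intro integral_nonneg Cbar_integrable Cbar_nonneg) auto

lemma integral_Cbar_mono:
  assumes "\<gamma> > 0" "\<xi> > 0" "D > 0" "R > 0" "0 \<le> s" "s \<le> t"
  shows "integral {0..s} (Cbar \<gamma> \<xi> \<eta> D R) \<le> integral {0..t} (Cbar \<gamma> \<xi> \<eta> D R)"
proof -
  have "integral {0..s} (Cbar \<gamma> \<xi> \<eta> D R) + integral {s..t} (Cbar \<gamma> \<xi> \<eta> D R)
      = integral {0..t} (Cbar \<gamma> \<xi> \<eta> D R)"
    using assms by (intro Henstock_Kurzweil_Integration.integral_combine Cbar_integrable) auto
  moreover have "0 \<le> integral {s..t} (Cbar \<gamma> \<xi> \<eta> D R)"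
    using assms by (intro integral_nonneg Cbar_integrable Cbar_nonneg) auto
  ultimately show ?thesis
    by linarith
qed

lemma integral_Cbar_le:
  assumes "\<gamma> > 0" "\<xi> > 0" "\<eta> > 0" "D > 0" "R > 0" "0 \<le> t"
  shows "integral {0..t} (Cbar \<gamma> \<xi> \<eta> D R) \<le> 4 * \<gamma> * \<xi> / R^2 / \<eta>"
proof -
  define K where "K = 4 * \<gamma> * \<xi> / R^2"
  have K: "K > 0"
    using assms by (simp add: K_def)
  have "((\<lambda>z. K * exp (- \<eta> * z)) has_integral (K / \<eta> - K / \<eta> * exp (- \<eta> * t))) {0..t}"
  proof -
    have "((\<lambda>z. - (K / \<eta>) * exp (- \<eta> * z)) has_real_derivative K * exp (- \<eta> * x)) (at x within {0..t})"
      for x using assms by (auto intro!: derivative_eq_intros)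
    then show ?thesis
      using fundamental_theorem_of_calculus[of 0 t "\<lambda>z. - (K / \<eta>) * exp (- \<eta> * z)"] assms
      by (simp add: has_real_derivative_iff_has_vector_derivative)
  qed
  moreover have "Cbar \<gamma> \<xi> \<eta> D R z \<le> K * exp (- \<eta> * z)" if "z \<in> {0..t}" for z
    using Cbar_le_exp[of \<gamma> \<xi> D R z \<eta>] assms that by (simp add: K_def)
  ultimately have "integral {0..t} (Cbar \<gamma> \<xi> \<eta> D R) \<le> K / \<eta> - K / \<eta> * exp (- \<eta> * t)"
    using assms by (intro has_integral_le[OF integrable_integral[OF Cbar_integrable]]) auto
  also have "\<dots> \<le> K / \<eta>"
    using K assms by simp
  finally show ?thesis
    by (simp add: K_def)
qed

lemma integral_Cbar_pos:
  assumes "\<gamma> > 0" "\<xi> > 0" "D > 0" "R > 0"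
  shows "0 < integral {0..1} (Cbar \<gamma> \<xi> \<eta> D R)"
proof -
  let ?c = "Cbar \<gamma> \<xi> \<eta> D R"
  obtain x where x: "x \<in> {1/2..1}" "\<And>y. y \<in> {1/2..1::real} \<Longrightarrow> ?c x \<le> ?c y"
    using continuous_attains_inf[of "{1/2..1::real}" ?c]
      continuous_on_subset[OF continuous_on_Cbar[OF assms(3,4)], of "{1/2..1}"] by auto
  have "?c integrable_on {1/2..1}"
    using assms by (intro Cbar_integrable) auto
  then have "?c x / 2 \<le> integral {1/2..1} ?c"
    using integral_le[of "\<lambda>_. ?c x" "{1/2..1}" ?c] x
    by (simp add: Henstock_Kurzweil_Integration.integrable_const_ivl)
  moreover have "integral {0..1/2} ?c + integral {1/2..1} ?c = integral {0..1} ?c"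
    using assms by (intro Henstock_Kurzweil_Integration.integral_combine Cbar_integrable) auto
  moreover have "0 \<le> integral {0..1/2} ?c"
    using assms by (rule integral_Cbar_nonneg)
  moreover have "?c x > 0"
    using x assms by (intro Cbar_pos) auto
  ultimately show ?thesis
    by linarith
qed

lemma mono_on_gfun:
  assumes "\<gamma> > 0" "\<xi> > 0" "D > 0" "R > 0"
  shows "mono_on {0..} (gfun N \<gamma> \<xi> \<eta> D R)"
  using assms by (intro mono_onI) (simp add: gfun_eq_integral_Cbar integral_Cbar_mono mult_left_mono)

lemma gfun_bounds:
  assumes "\<gamma> > 0" "\<xi> > 0" "\<eta> > 0" "D > 0" "R > 0" "0 \<le> t"
  shows "0 \<le> gfun N \<gamma> \<xi> \<eta> D R t" and "gfun N \<gamma> \<xi> \<eta> D R t \<le> real N * (4 * \<gamma> * \<xi> / R^2 / \<eta>)"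
proof -
  show "0 \<le> gfun N \<gamma> \<xi> \<eta> D R t"
    unfolding gfun_eq_integral_Cbar[OF \<open>0 \<le> t\<close>]
    using assms by (intro mult_nonneg_nonneg integral_Cbar_nonneg) auto
  show "gfun N \<gamma> \<xi> \<eta> D R t \<le> real N * (4 * \<gamma> * \<xi> / R^2 / \<eta>)"
    unfolding gfun_eq_integral_Cbar[OF \<open>0 \<le> t\<close>]
    using assms by (intro mult_left_mono integral_Cbar_le) auto
qed

lemma gfun_pos:
  assumes "N \<ge> 1" "\<gamma> > 0" "\<xi> > 0" "D > 0" "R > 0"
  shows "0 < gfun N \<gamma> \<xi> \<eta> D R 1"
  using assms integral_Cbar_pos[of \<gamma> \<xi> D R \<eta>] by (simp add: gfun_eq_integral_Cbar)

theorem theorem5p2: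
  fixes N :: nat and \<beta> \<gamma> \<xi> \<eta> D R :: real
  assumes "N \<ge> 1" and "\<beta> > 0" and "\<gamma> > 0" and "\<xi> > 0" and "\<eta> > 0" and "D > 0" and "R > 0"
  shows "\<exists>K r. K > 0 \<and> r > 0 \<and>
    (\<forall>t0 \<ge> 0. \<forall>V X. is_solution \<beta> (gfun N \<gamma> \<xi> \<eta> D R) t0 V X \<longrightarrow>
       (\<forall>t \<ge> t0. norm (V t, X t) \<le> K * exp (- r * (t - t0)) * norm (V t0, X t0)))"
proof -
  let ?g = "gfun N \<gamma> \<xi> \<eta> D R"
  let ?L = "Sup (?g ` {0..})"
  have bdd: "bdd_above (?g ` {0..})"
    using gfun_bounds(2) assms by (intro bdd_aboveI2) auto
  have g_le_L: "?g t \<le> ?L" if "0 \<le> t" for t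
    using bdd that by (intro cSup_upper) auto
  have "0 < ?L"
    using gfun_pos[of N \<gamma> \<xi> D R \<eta>] g_le_L[of 1] assms by simp
  moreover have "(?g \<longlongrightarrow> ?L) at_top"
    using mono_on_gfun bdd assms by (intro mono_on_tendsto_Sup_at_top) auto
  ultimately show ?thesis
    using assms gfun_bounds(1) g_le_L by (intro exp_stable_if_coefficient_tendsto) auto
qed

end
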